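(* Let $I_o\subseteq\mathbf{EFSym}$ be the subspace spanned by the $\mathbf S^f$ with $f$ not acyclic (i.e. $f$ has a cycle of length $\ge2$). Then $I_o$ is a Hopf ideal of $\mathbf{EFSym}$, and the quotient $\mathbf{EFSym}/I_o$ is isomorphic, as a Hopf algebra, to the Hopf subalgebra spanned by the $\mathbf S^\phi$ with $\phi$ acyclic, hence to $\mathbf H_o$.
   Context: $\mathbf{EFSym}$: over $A=\{a_{ij}:i\ne j,\ i,j\ge1\}$ with $a_{ij}\prec a_{kl}$ iff $j=k$, for $f:[n]\to[n]$, $\mathbf S^f$ is the sum of words $w_1\cdots w_n$ over $A$ with $w_{f(j)}\prec w_j$ whenever $f(j)\ne j$; these are linearly independent and span $\mathbf{EFSym}$, with product $\mathbf S^f\mathbf S^g=\mathbf S^{f\bullet g}$ (shifted concatenation: $i\mapsto f(i)$ for $i\le n$, $n+i\mapsto g(i)+n$) and coproduct $\Delta\mathbf S^f=\sum_{I\models f}\mathbf S^{\mathrm{std}(f^{[n]\setminus I})}\otimes\mathbf S^{\mathrm{std}(f^I)}$, where $I\models f$ means $f^{-1}(I)\subseteq I$, $f^I(x)=f(x)$ if $f(x)\in I$ and $x$ otherwise, and $\mathrm{std}$ conjugates by the increasing bijection $I\to[|I|]$. $\mathbf H_o$ is the Hopf algebra of ordered forests (rooted forests on vertex set $[n]$, product by shifted disjoint union, coproduct by admissible cuts), identified with the span of $\mathbf S^\phi$, $\phi$ acyclic, via $\mathcal F\mapsto\mathbf S^{f_{\mathcal F}}$ where $f_{\mathcal F}$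 maps each vertex to its parent and fixes roots. *)

theory Defs
  imports Main
begin

text \<open>Basis of EFSym: maps f : [n] -> [n], encoded 0-indexed as lists f with
  f!x < length f (so f represents x+1 |-> f!x + 1).\<close>

definition is_endo :: "nat list \<Rightarrow> bool" where
  "is_endo f \<longleftrightarrow> (\<forall>x\<in>set f. x < length f)"

definition app :: "nat list \<Rightarrow> nat \<Rightarrow> nat" where
  "app f x = (if x < length f then f ! x else x)"

definition acyclic_map :: "nat list \<Rightarrow> bool" where
  "acyclic_map f \<longleftrightarrow>
     (\<forall>x < length f. \<forall>k::nat. k \<ge> 1 \<and> (app f ^^ k) x = x \<longrightarrow> app f x = x)"

definition conc :: "nat list \<Rightarrow> nat list \<Rightarrow> nat list" where
  "conc f g = f @ map (\<lambda>x. x + length f) g"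

text \<open>std(f^J): restrict (f(x) if f(x) in J, else x) to J and standardize\<close>
definition std_restr :: "nat list \<Rightarrow> nat set \<Rightarrow> nat list" where
  "std_restr f J =
     map (\<lambda>j. card {y \<in> J. y < (if app f j \<in> J then app f j else j)})
         (sorted_list_of_set J)"

definition admissible :: "nat list \<Rightarrow> nat set \<Rightarrow> bool" where
  "admissible f I \<longleftrightarrow> I \<subseteq> {0..<length f} \<and> (\<forall>x < length f. app f x \<in> I \<longrightarrow> x \<in> I)"

text \<open>coefficient of S^a \<otimes> S^b in \<Delta> S^f\<close>
definition coprod_coeff :: "nat list \<Rightarrow> nat list \<Rightarrow> nat list \<Rightarrow> nat" where
  "coprod_coeff f a b = card {I. admissible f I \<and>
       std_restr f ({0..<length f} - I) = a \<and> std_restr f I = b}"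

text \<open>Elements of EFSym over a field: finitely supported coefficient functions
  on the basis S^f; tensors in EFSym \<otimes> EFSym: finitely supported functions on pairs.\<close>

definition supp :: "('a \<Rightarrow> 'k::zero) \<Rightarrow> 'a set" where
  "supp x = {f. x f \<noteq> 0}"

definition EFSym :: "(nat list \<Rightarrow> 'k::field) set" where
  "EFSym = {x. finite (supp x) \<and> supp x \<subseteq> {f. is_endo f}}"

definition span_basis :: "(nat list \<Rightarrow> bool) \<Rightarrow> (nat list \<Rightarrow> 'k::field) set" where
  "span_basis P = {x \<in> EFSym. \<forall>f \<in> supp x. P f}"

definition EFSym2 :: "(nat list \<times> nat list \<Rightarrow> 'k::field) set" where
  "EFSym2 = {t. finite (supp t) \<and> supp t \<subseteq> {(a,b). is_endo a \<and> is_endo b}}"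

definition bas :: "nat list \<Rightarrow> nat list \<Rightarrow> 'k::field" where
  "bas f = (\<lambda>g. if g = f then 1 else 0)"

definition mult :: "(nat list \<Rightarrow> 'k::field) \<Rightarrow> (nat list \<Rightarrow> 'k) \<Rightarrow> nat list \<Rightarrow> 'k" where
  "mult x y = (\<lambda>h. \<Sum>f\<in>supp x. \<Sum>g\<in>supp y. if conc f g = h then x f * y g else 0)"

definition unit_el :: "nat list \<Rightarrow> 'k::field" where
  "unit_el = bas []"

definition counit :: "(nat list \<Rightarrow> 'k::field) \<Rightarrow> 'k" where
  "counit x = x []"

definition coprod :: "(nat list \<Rightarrow> 'k::field) \<Rightarrow> nat list \<times> nat list \<Rightarrow> 'k" where
  "coprod x = (\<lambda>(a,b). \<Sum>f\<in>supp x. x f * of_nat (coprod_coeff f a b))"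

definition smult_el :: "'k \<Rightarrow> (nat list \<Rightarrow> 'k::field) \<Rightarrow> nat list \<Rightarrow> 'k" where
  "smult_el c x = (\<lambda>h. c * x h)"

definition linear_on :: "((nat list \<Rightarrow> 'k::field) \<Rightarrow> (nat list \<Rightarrow> 'k)) \<Rightarrow> bool" where
  "linear_on \<phi> \<longleftrightarrow> (\<forall>x\<in>EFSym. \<forall>y\<in>EFSym. \<phi> (\<lambda>h. x h + y h) = (\<lambda>h. \<phi> x h + \<phi> y h))
                 \<and> (\<forall>x\<in>EFSym. \<forall>c. \<phi> (smult_el c x) = smult_el c (\<phi> x))"

definition tensor_map ::
  "((nat list \<Rightarrow> 'k::field) \<Rightarrow> (nat list \<Rightarrow> 'k)) \<Rightarrow> ((nat list \<Rightarrow> 'k) \<Rightarrow> (nat list \<Rightarrow> 'k))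
   \<Rightarrow> (nat list \<times> nat list \<Rightarrow> 'k) \<Rightarrow> nat list \<times> nat list \<Rightarrow> 'k" where
  "tensor_map \<phi> \<psi> t = (\<lambda>(a,b). \<Sum>(c,d)\<in>supp t. t (c,d) * \<phi> (bas c) a * \<psi> (bas d) b)"

definition mult_tensor_map ::
  "((nat list \<Rightarrow> 'k::field) \<Rightarrow> (nat list \<Rightarrow> 'k)) \<Rightarrow> ((nat list \<Rightarrow> 'k) \<Rightarrow> (nat list \<Rightarrow> 'k))
   \<Rightarrow> (nat list \<times> nat list \<Rightarrow> 'k) \<Rightarrow> nat list \<Rightarrow> 'k" where
  "mult_tensor_map \<phi> \<psi> t =
     (\<lambda>h. \<Sum>(c,d)\<in>supp t. t (c,d) * mult (\<phi> (bas c)) (\<psi> (bas d)) h)"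

definition is_antipode :: "((nat list \<Rightarrow> 'k::field) \<Rightarrow> (nat list \<Rightarrow> 'k)) \<Rightarrow> bool" where
  "is_antipode S \<longleftrightarrow> S ` EFSym \<subseteq> EFSym \<and> linear_on S \<and>
     (\<forall>x\<in>EFSym. mult_tensor_map S id (coprod x) = smult_el (counit x) unit_el
               \<and> mult_tensor_map id S (coprod x) = smult_el (counit x) unit_el)"

definition I_o :: "(nat list \<Rightarrow> 'k::field) set" where
  "I_o = span_basis (\<lambda>f. \<not> acyclic_map f)"

text \<open>span of S^\<phi>, \<phi> acyclic (identified with H_o)\<close>
definition H_o :: "(nat list \<Rightarrow> 'k::field) set" where
  "H_o = span_basis acyclic_map"

text \<open>I_o \<otimes> EFSym + EFSym \<otimes> I_o (spanned by the S^a \<otimes> S^b, a or b not acyclic)\<close>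
definition I_o_tensor :: "(nat list \<times> nat list \<Rightarrow> 'k::field) set" where
  "I_o_tensor = {t \<in> EFSym2. \<forall>(a,b)\<in>supp t. \<not> acyclic_map a \<or> \<not> acyclic_map b}"

definition H_o_tensor :: "(nat list \<times> nat list \<Rightarrow> 'k::field) set" where
  "H_o_tensor = {t \<in> EFSym2. \<forall>(a,b)\<in>supp t. acyclic_map a \<and> acyclic_map b}"

definition hopf_ideal :: "(nat list \<Rightarrow> 'k::field) set \<Rightarrow> (nat list \<times> nat list \<Rightarrow> 'k) set \<Rightarrow> bool" where
  "hopf_ideal I IT \<longleftrightarrow>
     I \<subseteq> EFSym \<and>
     (\<forall>x\<in>I. \<forall>y\<in>EFSym. mult x y \<in> I \<and> mult y x \<in> I) \<and>
     (\<forall>x\<in>I. coprod x \<in> IT) \<and>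
     (\<forall>x\<in>I. counit x = 0) \<and>
     (\<forall>S. is_antipode S \<longrightarrow> S ` I \<subseteq> I)"

definition hopf_subalgebra :: "(nat list \<Rightarrow> 'k::field) set \<Rightarrow> (nat list \<times> nat list \<Rightarrow> 'k) set \<Rightarrow> bool" where
  "hopf_subalgebra B BT \<longleftrightarrow>
     B \<subseteq> EFSym \<and> unit_el \<in> B \<and>
     (\<forall>x\<in>B. \<forall>y\<in>B. mult x y \<in> B) \<and>
     (\<forall>x\<in>B. coprod x \<in> BT) \<and>
     (\<forall>S. is_antipode S \<longrightarrow> S ` B \<subseteq> B)"

text \<open>EFSym / I \<cong> B as Hopf algebras, expressed as a surjective Hopf-algebra map
  EFSym \<rightarrow> B with kernel exactly I (first isomorphism theorem).\<close>
definition quotient_iso :: "(nat list \<Rightarrow> 'k::field) set \<Rightarrow> (nat list \<Rightarrow> 'k) set \<Rightarrow> bool" where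
  "quotient_iso I B \<longleftrightarrow> (\<exists>\<pi>. linear_on \<pi> \<and> \<pi> ` EFSym = B \<and>
       {x \<in> EFSym. \<pi> x = (\<lambda>_. 0)} = I \<and>
       \<pi> unit_el = unit_el \<and>
       (\<forall>x\<in>EFSym. \<forall>y\<in>EFSym. \<pi> (mult x y) = mult (\<pi> x) (\<pi> y)) \<and>
       (\<forall>x\<in>EFSym. counit (\<pi> x) = counit x) \<and>
       (\<forall>x\<in>EFSym. coprod (\<pi> x) = tensor_map \<pi> \<pi> (coprod x)))"

end

theory Submission
  imports Defs "HOL-Library.Function_Algebras"
begin

text \<open>Call a predicate \<open>Q\<close> on basis maps Hopf-compatible if it holds for the empty map,
  \<open>Q (f \<bullet> g) \<longleftrightarrow> Q f \<and> Q g\<close>, and \<open>Q f \<longleftrightarrow> Q a \<and> Q b\<close> whenever \<open>S\<^sup>a \<otimes> S\<^sup>b\<close> occurs in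
  \<open>\<Delta> S\<^sup>f\<close>. Then the span of the \<open>S\<^sup>f\<close> with \<open>Q f\<close> is closed under product and coproduct, the span
  of the \<open>S\<^sup>f\<close> with \<open>\<not> Q f\<close> is an ideal and a coideal, and every antipode preserves both
  spans: by the recursion \<open>S(S\<^sup>f) = - \<Sum> S(S\<^sup>a) S\<^sup>b\<close> over the nontrivial cuts, induction on the
  size of \<open>f\<close> shows that \<open>Q\<close> is constant on the support of \<open>S(S\<^sup>f)\<close>. Deleting the coefficients
  outside \<open>Q\<close> is then a Hopf surjection onto the first span whose kernel is the second.

  Acyclicity is Hopf-compatible. A cycle of \<open>f \<bullet> g\<close> lies in one of the two factors, and
  standardization is conjugation by an order isomorphism. An admissible cut \<open>I\<close> is closed under
  preimages, so a cycle of \<open>f\<close> lies entirely in \<open>I\<close> or entirely in its complement, where it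
  survives as a cycle of \<open>f\<^sup>I\<close> or of \<open>f\<^sup>J\<close>, \<open>J\<close> the complement; conversely, cutting an
  acyclic map cannot create a cycle.\<close>

section \<open>Cycles of self-maps\<close>

definition acyclic_on :: "'a set \<Rightarrow> ('a \<Rightarrow> 'a) \<Rightarrow> bool" where
  "acyclic_on J r \<longleftrightarrow> (\<forall>x\<in>J. \<forall>k\<ge>1. (r ^^ k) x = x \<longrightarrow> r x = x)"

text \<open>\<open>restr (app f) J\<close> is the paper's \<open>f\<^sup>J\<close>: points whose image leaves \<open>J\<close> become fixed.\<close>

definition restr :: "('a \<Rightarrow> 'a) \<Rightarrow> 'a set \<Rightarrow> 'a \<Rightarrow> 'a" where
  "restr r J x = (if r x \<in> J then r x else x)"

lemma acyclic_on_Un: "acyclic_on (A \<union> B) r \<longleftrightarrow> acyclic_on A r \<and> acyclic_on B r"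
  by (auto simp: acyclic_on_def)

lemma funpow_closed: "\<forall>x\<in>J. r x \<in> J \<Longrightarrow> x \<in> J \<Longrightarrow> (r ^^ k) x \<in> J"
  by (induction k) auto

lemma acyclic_on_conjugate:
  assumes bij: "bij_betw \<phi> J K" and closed: "\<forall>x\<in>J. r x \<in> J"
    and comm: "\<forall>x\<in>J. s (\<phi> x) = \<phi> (r x)"
  shows "acyclic_on K s \<longleftrightarrow> acyclic_on J r"
proof -
  have pow: "(s ^^ k) (\<phi> x) = \<phi> ((r ^^ k) x)" if "x \<in> J" for x k
    by (induction k) (simp_all add: comm funpow_closed[OF closed that])
  have periodic: "(s ^^ k) (\<phi> x) = \<phi> x \<longleftrightarrow> (r ^^ k) x = x" if "x \<in> J" for x k
    using pow[OF that] inj_onD[OF bij_betw_imp_inj_on[OF bij]] funpow_closed[OF closed that] that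
    by auto
  have "acyclic_on K s \<longleftrightarrow> (\<forall>x\<in>J. \<forall>k\<ge>1. (s ^^ k) (\<phi> x) = \<phi> x \<longrightarrow> (s ^^ 1) (\<phi> x) = \<phi> x)"
    using bij_betw_imp_surj_on[OF bij] unfolding acyclic_on_def by auto
  also have "\<dots> \<longleftrightarrow> acyclic_on J r"
    using periodic periodic[where k=1] unfolding acyclic_on_def by auto
  finally show ?thesis .
qed

lemma periodic_orbit_avoids_fixed_points:
  assumes "k \<ge> 1" "(r ^^ k) x = x" "r x \<noteq> x"
  shows "r ((r ^^ i) x) \<noteq> (r ^^ i) x"
proof
  assume fixed: "r ((r ^^ i) x) = (r ^^ i) x"
  have stays: "(r ^^ j) ((r ^^ i) x) = (r ^^ i) x" for j
    using fixed by (induction j) auto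
  have "((r ^^ k) ^^ i) x = x"
    using assms(2) by (induction i) auto
  then have "(r ^^ (k * i)) x = x" by (simp add: funpow_mult mult.commute)
  moreover have "k * i = (k * i - i) + i" using assms(1) by (cases k) auto
  ultimately have "(r ^^ (k * i - i)) ((r ^^ i) x) = x" by (metis funpow_add o_apply)
  then have "x = (r ^^ i) x" using stays by simp
  then show False using fixed assms(3) by simp
qed

lemma acyclic_on_restr:
  assumes acyc: "acyclic_on U r" and "J \<subseteq> U"
  shows "acyclic_on J (restr r J)"
  unfolding acyclic_on_def
proof (intro ballI allI impI)
  fix x k assume x: "x \<in> J" and k: "k \<ge> 1" and period: "(restr r J ^^ k) x = x"
  let ?r = "restr r J"
  show "?r x = x"
  proof (rule ccontr)
    assume moves: "?r x \<noteq> x"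
    \<comment> \<open>the orbit never reaches a fixed point of \<open>?r\<close>, and off those \<open>?r\<close> agrees with \<open>r\<close>\<close>
    have "(?r ^^ i) x = (r ^^ i) x" for i
    proof (induction i)
      case (Suc i)
      have "?r ((?r ^^ i) x) \<noteq> (?r ^^ i) x"
        using periodic_orbit_avoids_fixed_points[OF k period moves] .
      then show ?case using Suc by (auto simp: restr_def split: if_splits)
    qed simp
    then have "(r ^^ k) x = x" using period by simp
    then have "r x = x" using acyc x assms(2) k unfolding acyclic_on_def by blast
    then show False using moves by (simp add: restr_def split: if_splits)
  qed
qed

lemma cycle_not_acyclic_on_restr:
  assumes k: "k \<ge> 1" and period: "(r ^^ k) x = x" and moves: "r x \<noteq> x"
    and orbit: "\<And>i. i \<le> k \<Longrightarrow> (r ^^ i) x \<in> J"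
  shows "\<not> acyclic_on J (restr r J)"
proof -
  have "i \<le> k \<Longrightarrow> (restr r J ^^ i) x = (r ^^ i) x" for i
  proof (induction i)
    case (Suc i)
    then show ?case using orbit[OF Suc.prems] by (simp add: restr_def)
  qed simp
  from this[of k] this[of 1] have "(restr r J ^^ k) x = x" "restr r J x \<noteq> x"
    using k period moves by simp_all
  then show ?thesis
    using orbit[of 0] k unfolding acyclic_on_def by auto
qed

lemma funpow_in_down_closed:
  assumes closed: "\<forall>x\<in>U. r x \<in> U" and down: "\<forall>x\<in>U. r x \<in> I \<longrightarrow> x \<in> I"
  shows "y \<in> U \<Longrightarrow> (r ^^ m) y \<in> I \<Longrightarrow> y \<in> I"
proof (induction m arbitrary: y)
  case (Suc m)
  then have "r y \<in> I" using closed by (simp add: funpow_swap1)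
  then show ?case using down Suc.prems(1) by blast
qed simp

lemma acyclic_on_cut:
  assumes closed: "\<forall>x\<in>U. r x \<in> U" and down: "\<forall>x\<in>U. r x \<in> I \<longrightarrow> x \<in> I" and "I \<subseteq> U"
  shows "acyclic_on U r \<longleftrightarrow> acyclic_on I (restr r I) \<and> acyclic_on (U - I) (restr r (U - I))"
proof
  assume "acyclic_on U r"
  then show "acyclic_on I (restr r I) \<and> acyclic_on (U - I) (restr r (U - I))"
    using acyclic_on_restr assms(3) by blast
next
  assume halves: "acyclic_on I (restr r I) \<and> acyclic_on (U - I) (restr r (U - I))"
  show "acyclic_on U r"
    unfolding acyclic_on_def
  proof (intro ballI allI impI; rule ccontr)
    fix x k assume x: "x \<in> U" and k: "k \<ge> 1" and period: "(r ^^ k) x = x" and moves: "r x \<noteq> x"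
    have in_U: "(r ^^ i) x \<in> U" for i using funpow_closed[OF closed x] .
    show False
    proof (cases "x \<in> I")
      case True
      have "(r ^^ i) x \<in> I" if "i \<le> k" for i
      proof -
        have "(r ^^ (k - i)) ((r ^^ i) x) = x"
          using that period by (metis funpow_add le_add_diff_inverse2 o_apply)
        then show ?thesis using funpow_in_down_closed[OF closed down in_U] True by metis
      qed
      then show False using cycle_not_acyclic_on_restr[OF k period moves] halves by blast
    next
      case False
      then have "(r ^^ i) x \<in> U - I" for i
        using funpow_in_down_closed[OF closed down x] in_U by blast
      then show False using cycle_not_acyclic_on_restr[OF k period moves] halves by blast
    qed
  qed
qed

section \<open>Standardization\<close>

lemma app_in_range: "is_endo f \<Longrightarrow> x < length f \<Longrightarrow> app f x < length f"
  unfolding is_endo_def app_def by auto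

definition rank_in :: "nat set \<Rightarrow> nat \<Rightarrow> nat" where
  "rank_in J y = card {z \<in> J. z < y}"

lemma rank_in_nth:
  assumes "finite J" "i < card J"
  shows "rank_in J (sorted_list_of_set J ! i) = i"
proof -
  let ?e = "sorted_list_of_set J"
  have sorted: "sorted_wrt (<) ?e" and len: "length ?e = card J" and dist: "distinct ?e"
    using assms(1) by (simp_all add: strict_sorted_list_of_set)
  have less_iff: "?e ! j < ?e ! i \<longleftrightarrow> j < i" if "j < card J" for j
    using sorted_wrt_nth_less[OF sorted] that assms(2) len
    by (metis less_asym linorder_neqE_nat)
  have set_e: "set ?e = J" using assms(1) by simp
  have "{z \<in> J. z < ?e ! i} = (!) ?e ` {..<i}"
  proof (intro set_eqI iffI)
    fix z assume "z \<in> {z \<in> J. z < ?e ! i}"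
    then have z: "z \<in> set ?e" "z < ?e ! i" using set_e by auto
    then obtain j where "j < card J" "z = ?e ! j" using len by (metis in_set_conv_nth)
    then show "z \<in> (!) ?e ` {..<i}" using less_iff z(2) by auto
  next
    fix z assume "z \<in> (!) ?e ` {..<i}"
    then obtain j where "j < i" "z = ?e ! j" by auto
    then show "z \<in> {z \<in> J. z < ?e ! i}"
      using less_iff assms(2) len set_e nth_mem[of j ?e] by auto
  qed
  moreover have "inj_on ((!) ?e) {..<i}" using dist assms(2) len by (auto intro: inj_on_nth)
  ultimately show ?thesis unfolding rank_in_def by (simp add: card_image)
qed

lemma nth_rank_in:
  assumes "finite J" "y \<in> J"
  shows "rank_in J y < card J" and "sorted_list_of_set J ! rank_in J y = y"
proof -
  obtain i where "i < card J" "y = sorted_list_of_set J ! i"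
    using assms by (metis in_set_conv_nth length_sorted_list_of_set set_sorted_list_of_set)
  then show "rank_in J y < card J" "sorted_list_of_set J ! rank_in J y = y"
    using rank_in_nth[OF assms(1)] by simp_all
qed

lemma nth_sorted_list_of_set_in: "finite J \<Longrightarrow> i < card J \<Longrightarrow> sorted_list_of_set J ! i \<in> J"
  by (metis length_sorted_list_of_set nth_mem set_sorted_list_of_set)

lemma bij_betw_rank_in: "finite J \<Longrightarrow> bij_betw (rank_in J) J {0..<card J}"
  by (rule bij_betw_byWitness[where f' = "(!) (sorted_list_of_set J)"])
     (auto simp: nth_rank_in rank_in_nth nth_sorted_list_of_set_in)

lemma std_restr_eq:
  "std_restr f J = map (\<lambda>j. rank_in J (restr (app f) J j)) (sorted_list_of_set J)"
  by (simp add: std_restr_def rank_in_def restr_def)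

lemma length_std_restr: "finite J \<Longrightarrow> length (std_restr f J) = card J"
  by (simp add: std_restr_def)

lemma is_endo_std_restr: "finite J \<Longrightarrow> is_endo (std_restr f J)"
  unfolding is_endo_def length_std_restr std_restr_eq
  by (auto simp: nth_rank_in restr_def)

lemma std_restr_full: "is_endo f \<Longrightarrow> std_restr f {0..<length f} = f"
proof -
  assume f: "is_endo f"
  have "rank_in {0..<length f} y = y" if "y < length f" for y
  proof -
    have "{z \<in> {0..<length f}. z < y} = {0..<y}" using that by auto
    then show ?thesis by (simp add: rank_in_def)
  qed
  then show ?thesis
    using app_in_range[OF f] by (intro nth_equalityI) (simp_all add: std_restr_eq restr_def app_def)
qed

lemma std_restr_empty: "std_restr f {} = []"
  by (simp add: std_restr_def)

lemma std_restr_Nil_iff: "finite J \<Longrightarrow> std_restr f J = [] \<longleftrightarrow> J = {}"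
  by (metis card_0_eq length_0_conv length_std_restr)

lemma app_std_restr:
  assumes "finite J" "x \<in> J"
  shows "app (std_restr f J) (rank_in J x) = rank_in J (restr (app f) J x)"
  using nth_rank_in[OF assms]
  by (simp add: app_def length_std_restr[OF assms(1)] std_restr_eq)

lemma acyclic_map_iff_acyclic_on: "acyclic_map f \<longleftrightarrow> acyclic_on {0..<length f} (app f)"
  by (auto simp: acyclic_map_def acyclic_on_def)

lemma acyclic_map_std_restr:
  assumes "finite J"
  shows "acyclic_map (std_restr f J) \<longleftrightarrow> acyclic_on J (restr (app f) J)"
  unfolding acyclic_map_iff_acyclic_on length_std_restr[OF assms]
  by (rule acyclic_on_conjugate[OF bij_betw_rank_in[OF assms]])
     (auto simp: restr_def app_std_restr[OF assms])

section \<open>Shifted concatenation and admissible cuts\<close>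

lemma is_endo_conc: "is_endo f \<Longrightarrow> is_endo g \<Longrightarrow> is_endo (conc f g)"
  unfolding is_endo_def conc_def by auto

lemma app_conc_left: "x < length f \<Longrightarrow> app (conc f g) x = app f x"
  by (simp add: app_def conc_def nth_append)

lemma app_conc_right: "app (conc f g) (y + length f) = app g y + length f"
  by (simp add: app_def conc_def nth_append)

lemma acyclic_map_conc:
  assumes f: "is_endo f" and g: "is_endo g"
  shows "acyclic_map (conc f g) \<longleftrightarrow> acyclic_map f \<and> acyclic_map g"
proof -
  let ?n = "length f" and ?m = "length g" and ?h = "app (conc f g)"
  have "{0..<length (conc f g)} = {0..<?n} \<union> {?n..<?m + ?n}"
    by (auto simp: conc_def)
  moreover have "acyclic_on {0..<?n} ?h \<longleftrightarrow> acyclic_on {0..<?n} (app f)"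
    by (rule acyclic_on_conjugate[where \<phi> = id]) (simp_all add: app_in_range[OF f] app_conc_left)
  moreover have "acyclic_on {?n..<?m + ?n} ?h \<longleftrightarrow> acyclic_on {0..<?m} (app g)"
    by (rule acyclic_on_conjugate[where \<phi> = "\<lambda>y. y + ?n"])
       (simp_all add: bij_betw_def app_in_range[OF g] app_conc_right)
  ultimately show ?thesis
    by (simp add: acyclic_map_iff_acyclic_on acyclic_on_Un)
qed

lemma coprod_coeff_nonzeroE:
  assumes "coprod_coeff f a b \<noteq> 0"
  obtains I where "admissible f I" "std_restr f ({0..<length f} - I) = a" "std_restr f I = b"
proof -
  have "{I. admissible f I \<and> std_restr f ({0..<length f} - I) = a \<and> std_restr f I = b} \<noteq> {}"
    using assms unfolding coprod_coeff_def by (metis card.empty)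
  then show ?thesis using that by blast
qed

lemma admissible_finite: "admissible f I \<Longrightarrow> finite I"
  unfolding admissible_def using finite_subset by blast

lemma acyclic_map_coprod_coeff:
  assumes f: "is_endo f" and "coprod_coeff f a b \<noteq> 0"
  shows "acyclic_map f \<longleftrightarrow> acyclic_map a \<and> acyclic_map b"
proof -
  let ?U = "{0..<length f}"
  obtain I where I: "admissible f I" "std_restr f (?U - I) = a" "std_restr f I = b"
    using coprod_coeff_nonzeroE[OF assms(2)] .
  have "acyclic_on ?U (app f) \<longleftrightarrow>
      acyclic_on I (restr (app f) I) \<and> acyclic_on (?U - I) (restr (app f) (?U - I))"
    using I(1) app_in_range[OF f] by (intro acyclic_on_cut) (auto simp: admissible_def)
  moreover have "acyclic_map a \<longleftrightarrow> acyclic_on (?U - I) (restr (app f) (?U - I))"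
    using acyclic_map_std_restr[of "?U - I" f] I(2) by simp
  moreover have "acyclic_map b \<longleftrightarrow> acyclic_on I (restr (app f) I)"
    using acyclic_map_std_restr[OF admissible_finite[OF I(1)], of f] I(3) by simp
  ultimately show ?thesis by (auto simp: acyclic_map_iff_acyclic_on)
qed

lemma coprod_coeff_self_Nil:
  assumes "is_endo f"
  shows "coprod_coeff f f [] = 1"
proof -
  have "{I. admissible f I \<and> std_restr f ({0..<length f} - I) = f \<and> std_restr f I = []} = {{}}"
    using std_restr_full[OF assms] by (auto simp: std_restr_Nil_iff admissible_finite std_restr_empty
        admissible_def)
  then show ?thesis by (simp add: coprod_coeff_def)
qed

lemma coprod_coeff_shorter:
  assumes f: "is_endo f" and "coprod_coeff f c d \<noteq> 0" and "(c, d) \<noteq> (f, [])"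
  shows "length c < length f"
proof -
  let ?U = "{0..<length f}"
  obtain I where I: "admissible f I" "std_restr f (?U - I) = c" "std_restr f I = d"
    using coprod_coeff_nonzeroE[OF assms(2)] .
  have "I \<noteq> {}" using I assms(3) std_restr_full[OF f] std_restr_empty by auto
  moreover have "I \<subseteq> ?U" using I(1) by (simp add: admissible_def)
  ultimately have "card (?U - I) < card ?U"
    by (intro psubset_card_mono) auto
  then show ?thesis using I(2) length_std_restr[of "?U - I" f] by simp
qed

lemma coprod_coeff_endo: "coprod_coeff f a b \<noteq> 0 \<Longrightarrow> is_endo a \<and> is_endo b"
  by (metis coprod_coeff_nonzeroE admissible_finite finite_Diff finite_atLeastLessThan
      is_endo_std_restr)

lemma finite_coprod_coeff_support: "finite {(a, b). coprod_coeff f a b \<noteq> 0}"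
proof (rule finite_subset)
  let ?U = "{0..<length f}"
  show "{(a, b). coprod_coeff f a b \<noteq> 0} \<subseteq> (\<lambda>I. (std_restr f (?U - I), std_restr f I)) ` Pow ?U"
  proof
    fix p assume "p \<in> {(a, b). coprod_coeff f a b \<noteq> 0}"
    then obtain a b where p: "p = (a, b)" "coprod_coeff f a b \<noteq> 0" by blast
    then obtain I where "admissible f I" "std_restr f (?U - I) = a" "std_restr f I = b"
      using coprod_coeff_nonzeroE[OF p(2)] by blast
    then show "p \<in> (\<lambda>I. (std_restr f (?U - I), std_restr f I)) ` Pow ?U"
      using p(1) by (auto simp: admissible_def)
  qed
qed simp

lemma supp_bas: "supp (bas f :: nat list \<Rightarrow> 'k::field) = {f}"
  by (auto simp: supp_def bas_def)

lemma bas_in_EFSym: "is_endo f \<Longrightarrow> (bas f :: nat list \<Rightarrow> 'k::field) \<in> EFSym"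
  by (simp add: EFSym_def supp_bas)

lemma EFSym_finite_supp: "x \<in> EFSym \<Longrightarrow> finite (supp x)"
  by (simp add: EFSym_def)

lemma EFSym_supp_endo: "x \<in> EFSym \<Longrightarrow> f \<in> supp x \<Longrightarrow> is_endo f"
  by (auto simp: EFSym_def)

lemma supp_mult: "h \<in> supp (mult x y) \<Longrightarrow> \<exists>f\<in>supp x. \<exists>g\<in>supp y. h = conc f g"
  unfolding supp_def mult_def
  by (fastforce elim!: sum.not_neutral_contains_not_neutral split: if_splits)

lemma mult_in_EFSym:
  assumes "x \<in> EFSym" "y \<in> EFSym"
  shows "mult x y \<in> EFSym"
proof -
  have "supp (mult x y) \<subseteq> (\<lambda>(f, g). conc f g) ` (supp x \<times> supp y)"
    using supp_mult by fastforce
  then have "finite (supp (mult x y))"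
    using assms by (meson EFSym_finite_supp finite_SigmaI finite_imageI finite_subset)
  moreover have "supp (mult x y) \<subseteq> {f. is_endo f}"
    using assms by (auto dest!: supp_mult intro: is_endo_conc EFSym_supp_endo)
  ultimately show ?thesis by (simp add: EFSym_def)
qed

lemma mult_eq_sum_superset:
  assumes "finite A" "supp x \<subseteq> A" "finite B" "supp y \<subseteq> B"
  shows "mult x y h = (\<Sum>f\<in>A. \<Sum>g\<in>B. if conc f g = h then x f * y g else 0)"
  unfolding mult_def
proof (rule sum.mono_neutral_cong_left[OF assms(1,2)])
  fix f
  show "(\<Sum>g\<in>supp y. if conc f g = h then x f * y g else 0)
      = (\<Sum>g\<in>B. if conc f g = h then x f * y g else 0)"
    by (rule sum.mono_neutral_left) (use assms in \<open>auto simp: supp_def\<close>)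
qed (auto simp: supp_def intro: sum.neutral)

lemma mult_bas_Nil_right:
  assumes "finite (supp z)"
  shows "mult z (bas []) = z"
proof
  fix h
  have "mult z (bas []) h = (\<Sum>f\<in>supp z. if f = h then z f else 0)"
    unfolding mult_def supp_bas by (simp add: conc_def bas_def cong: if_cong)
  also have "\<dots> = z h"
    using assms by (simp add: sum.delta' supp_def)
  finally show "mult z (bas []) h = z h" .
qed

lemma supp_coprod:
  assumes "p \<in> supp (coprod x)"
  shows "\<exists>f\<in>supp x. coprod_coeff f (fst p) (snd p) \<noteq> 0"
proof -
  have "(\<Sum>f\<in>supp x. x f * of_nat (coprod_coeff f (fst p) (snd p))) \<noteq> 0"
    using assms by (simp add: supp_def coprod_def case_prod_beta)
  then obtain f where "f \<in> supp x" "x f * of_nat (coprod_coeff f (fst p) (snd p)) \<noteq> 0"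
    by (rule sum.not_neutral_contains_not_neutral)
  then show ?thesis by (metis mult_zero_right of_nat_0)
qed

lemma coprod_in_EFSym2:
  assumes "x \<in> EFSym"
  shows "coprod x \<in> EFSym2"
proof -
  have "supp (coprod x) \<subseteq> (\<Union>f\<in>supp x. {(a, b). coprod_coeff f a b \<noteq> 0})"
    by (fastforce dest: supp_coprod)
  then have "finite (supp (coprod x))"
    using EFSym_finite_supp[OF assms] finite_coprod_coeff_support by (meson finite_UN finite_subset)
  moreover have "supp (coprod x) \<subseteq> {(a, b). is_endo a \<and> is_endo b}"
    using coprod_coeff_endo by (fastforce dest: supp_coprod)
  ultimately show ?thesis by (simp add: EFSym2_def)
qed

lemma coprod_bas: "coprod (bas f :: nat list \<Rightarrow> 'k::field) p = of_nat (coprod_coeff f (fst p) (snd p))"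
  unfolding coprod_def supp_bas by (simp add: bas_def case_prod_beta)

lemma EFSym_zero: "(0 :: nat list \<Rightarrow> 'k::field) \<in> EFSym"
  by (simp add: EFSym_def supp_def)

lemma EFSym_add:
  assumes "x \<in> EFSym" "y \<in> EFSym"
  shows "x + y \<in> EFSym"
proof -
  have "supp (x + y) \<subseteq> supp x \<union> supp y" by (auto simp: supp_def)
  then show ?thesis using assms unfolding EFSym_def by (auto intro: finite_subset)
qed

lemma EFSym_smult: "x \<in> EFSym \<Longrightarrow> smult_el c x \<in> EFSym"
  unfolding EFSym_def by (auto intro: finite_subset[of _ "supp x"] simp: supp_def smult_el_def)

lemma EFSym_sum: "finite A \<Longrightarrow> (\<And>a. a \<in> A \<Longrightarrow> v a \<in> EFSym) \<Longrightarrow> sum v A \<in> EFSym"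
  by (induction A rule: finite_induct) (auto simp: EFSym_zero EFSym_add)

lemma sum_fun_apply: "sum v A h = (\<Sum>a\<in>A. v a h)"
  by (induction A rule: infinite_finite_induct) auto

lemma EFSym_decomp:
  assumes "x \<in> EFSym"
  shows "x = (\<Sum>f\<in>supp x. smult_el (x f) (bas f))"
proof
  fix h
  have "(\<Sum>f\<in>supp x. smult_el (x f) (bas f)) h = (\<Sum>f\<in>supp x. if h = f then x f else 0)"
    unfolding sum_fun_apply by (rule sum.cong) (auto simp: smult_el_def bas_def)
  also have "\<dots> = x h" using EFSym_finite_supp[OF assms] by (simp add: sum.delta supp_def)
  finally show "x h = (\<Sum>f\<in>supp x. smult_el (x f) (bas f)) h" by simp
qed

lemma linear_on_add: "linear_on S \<Longrightarrow> x \<in> EFSym \<Longrightarrow> y \<in> EFSym \<Longrightarrow> S (x + y) = S x + S y"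
  unfolding linear_on_def plus_fun_def by blast

lemma linear_on_smult: "linear_on S \<Longrightarrow> x \<in> EFSym \<Longrightarrow> S (smult_el c x) = smult_el c (S x)"
  unfolding linear_on_def by blast

lemma linear_on_zero:
  assumes "linear_on S"
  shows "S (0 :: nat list \<Rightarrow> 'k::field) = 0"
proof -
  have "smult_el 0 (0 :: nat list \<Rightarrow> 'k) = 0" by (simp add: smult_el_def fun_eq_iff)
  then show ?thesis
    using linear_on_smult[OF assms EFSym_zero, of 0] by (simp add: smult_el_def zero_fun_def)
qed

lemma linear_on_sum:
  assumes "linear_on S" "finite A" "\<And>a. a \<in> A \<Longrightarrow> v a \<in> EFSym"
  shows "S (sum v A) = (\<Sum>a\<in>A. S (v a))"
  using assms(2,3)
proof (induction A rule: finite_induct)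
  case empty
  then show ?case using linear_on_zero[OF assms(1)] by (simp add: zero_fun_def)
next
  case (insert a A)
  have "S (sum v (insert a A)) = S (v a + sum v A)" by (simp only: sum.insert[OF insert(1,2)])
  also have "\<dots> = S (v a) + S (sum v A)"
    using insert.prems by (intro linear_on_add[OF assms(1)] EFSym_sum[OF insert(1)]) auto
  also have "\<dots> = (\<Sum>a\<in>insert a A. S (v a))" using insert by simp
  finally show ?case .
qed

lemma supp_linear_image:
  assumes S: "linear_on S" and x: "x \<in> EFSym" and h: "h \<in> supp (S x)"
  shows "\<exists>f\<in>supp x. h \<in> supp (S (bas f))"
proof -
  have bas: "bas f \<in> EFSym" if "f \<in> supp x" for f
    using bas_in_EFSym EFSym_supp_endo[OF x that] by blast
  have "S x = (\<Sum>f\<in>supp x. smult_el (x f) (S (bas f)))"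
    by (subst EFSym_decomp[OF x], subst linear_on_sum[OF S EFSym_finite_supp[OF x]])
       (simp_all add: EFSym_smult bas linear_on_smult[OF S])
  then have "(\<Sum>f\<in>supp x. x f * S (bas f) h) \<noteq> 0"
    using h by (simp add: supp_def sum_fun_apply smult_el_def)
  then obtain f where "f \<in> supp x" "x f * S (bas f) h \<noteq> 0"
    by (rule sum.not_neutral_contains_not_neutral)
  then show ?thesis by (auto simp: supp_def)
qed

section \<open>The antipode\<close>

lemma antipode_in_EFSym: "is_antipode S \<Longrightarrow> x \<in> EFSym \<Longrightarrow> S x \<in> EFSym"
  unfolding is_antipode_def by blast

text \<open>Evaluating \<open>m \<circ> (S \<otimes> id) \<circ> \<Delta> = \<eta> \<circ> \<epsilon>\<close> on \<open>S\<^sup>f\<close> isolates the term \<open>S(S\<^sup>f)\<close> coming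
  from the cut \<open>I = \<emptyset>\<close>; every other term has a strictly shorter left tensor factor.\<close>

lemma antipode_supp_bas:
  fixes S :: "(nat list \<Rightarrow> 'k::field) \<Rightarrow> nat list \<Rightarrow> 'k"
  assumes S: "is_antipode S" and f: "is_endo f" and h: "h \<in> supp (S (bas f))"
  shows "(f = [] \<and> h = []) \<or>
    (\<exists>c d. length c < length f \<and> coprod_coeff f c d \<noteq> 0 \<and> h \<in> supp (mult (S (bas c)) (bas d)))"
proof -
  let ?T = "supp (coprod (bas f :: nat list \<Rightarrow> 'k))"
  define F where "F p = coprod (bas f :: nat list \<Rightarrow> 'k) p * mult (S (bas (fst p))) (bas (snd p)) h"
    for p
  have bf: "(bas f :: nat list \<Rightarrow> 'k) \<in> EFSym" using bas_in_EFSym[OF f] .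
  have "mult_tensor_map S id (coprod (bas f)) h = smult_el (counit (bas f)) unit_el h"
    using S bf unfolding is_antipode_def by auto
  then have total: "(\<Sum>p\<in>?T. F p) = counit (bas f :: nat list \<Rightarrow> 'k) * unit_el h"
    by (simp add: F_def mult_tensor_map_def smult_el_def case_prod_beta)
  have coeff_self: "coprod (bas f :: nat list \<Rightarrow> 'k) (f, []) = 1"
    using coprod_bas[of f "(f, [])"] coprod_coeff_self_Nil[OF f] by simp
  then have "(f, []) \<in> ?T" by (simp add: supp_def)
  moreover have "F (f, []) = S (bas f) h"
    using coeff_self mult_bas_Nil_right[OF EFSym_finite_supp[OF antipode_in_EFSym[OF S bf]]]
    by (simp add: F_def)
  moreover have "finite ?T" using coprod_in_EFSym2[OF bf] by (simp add: EFSym2_def)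
  ultimately have split: "(\<Sum>p\<in>?T. F p) = S (bas f) h + (\<Sum>p\<in>?T - {(f, [])}. F p)"
    by (simp add: sum.remove)
  show ?thesis
  proof (cases "\<exists>p\<in>?T - {(f, [])}. F p \<noteq> 0")
    case True
    then obtain p where p: "p \<in> ?T" "p \<noteq> (f, [])" "F p \<noteq> 0" by blast
    then have "coprod_coeff f (fst p) (snd p) \<noteq> 0"
      by (metis F_def coprod_bas mult_zero_left of_nat_0)
    moreover have "h \<in> supp (mult (S (bas (fst p))) (bas (snd p)))"
      using p(3) by (simp add: F_def supp_def)
    moreover have "length (fst p) < length f"
      using coprod_coeff_shorter[OF f calculation(1)] p(2) by simp
    ultimately show ?thesis by blast
  next
    case False
    then have "S (bas f) h = counit (bas f :: nat list \<Rightarrow> 'k) * unit_el h"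
      using total split by simp
    then have "counit (bas f :: nat list \<Rightarrow> 'k) \<noteq> 0" "(unit_el h :: 'k) \<noteq> 0"
      using h by (auto simp: supp_def)
    then show ?thesis by (auto simp: counit_def unit_el_def bas_def split: if_splits)
  qed
qed

section \<open>Hopf-compatible predicates\<close>

lemma mem_span_basis: "x \<in> span_basis P \<longleftrightarrow> x \<in> EFSym \<and> (\<forall>f\<in>supp x. P f)"
  by (simp add: span_basis_def)

definition proj_span :: "(nat list \<Rightarrow> bool) \<Rightarrow> (nat list \<Rightarrow> 'k::field) \<Rightarrow> nat list \<Rightarrow> 'k" where
  "proj_span Q x = (\<lambda>h. if Q h then x h else 0)"

lemma supp_proj_span: "supp (proj_span Q x) \<subseteq> supp x"
  by (auto simp: supp_def proj_span_def)

lemma proj_span_in_EFSym: "x \<in> EFSym \<Longrightarrow> proj_span Q x \<in> EFSym"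
  using supp_proj_span unfolding EFSym_def by (blast intro: finite_subset)

lemma coprod_eq_sum_superset:
  assumes "finite A" "supp x \<subseteq> A"
  shows "coprod x (a, b) = (\<Sum>f\<in>A. x f * of_nat (coprod_coeff f a b))"
  unfolding coprod_def using assms by (auto intro: sum.mono_neutral_left simp: supp_def)

lemma tensor_map_proj_span:
  assumes "finite (supp t)"
  shows "tensor_map (proj_span Q) (proj_span Q) t (a, b) = (if Q a \<and> Q b then t (a, b) else 0)"
proof -
  have "tensor_map (proj_span Q) (proj_span Q) t (a, b)
      = (\<Sum>p\<in>supp t. if p = (a, b) then (if Q a \<and> Q b then t (a, b) else 0) else 0)"
    unfolding tensor_map_def prod.case
    by (rule sum.cong) (auto simp: proj_span_def bas_def split: prod.splits)
  also have "\<dots> = (if Q a \<and> Q b then t (a, b) else 0)"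
    using assms by (simp add: sum.delta' supp_def)
  finally show ?thesis .
qed

definition hopf_compatible :: "(nat list \<Rightarrow> bool) \<Rightarrow> bool" where
  "hopf_compatible Q \<longleftrightarrow> Q [] \<and>
     (\<forall>f g. is_endo f \<longrightarrow> is_endo g \<longrightarrow> Q (conc f g) = (Q f \<and> Q g)) \<and>
     (\<forall>f a b. is_endo f \<longrightarrow> coprod_coeff f a b \<noteq> 0 \<longrightarrow> Q f = (Q a \<and> Q b))"

context
  fixes Q :: "nat list \<Rightarrow> bool"
  assumes Q: "hopf_compatible Q"
begin

lemma compatible_Nil: "Q []"
  using Q by (simp add: hopf_compatible_def)

lemma compatible_conc: "is_endo f \<Longrightarrow> is_endo g \<Longrightarrow> Q (conc f g) = (Q f \<and> Q g)"
  using Q by (simp add: hopf_compatible_def)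

lemma compatible_coprod_coeff: "is_endo f \<Longrightarrow> coprod_coeff f a b \<noteq> 0 \<Longrightarrow> Q f = (Q a \<and> Q b)"
  using Q by (simp add: hopf_compatible_def)

lemma compatible_supp_mult:
  assumes x: "x \<in> EFSym" and y: "y \<in> EFSym" and h: "h \<in> supp (mult x y)"
  shows "\<exists>f\<in>supp x. \<exists>g\<in>supp y. Q h = (Q f \<and> Q g)"
  using supp_mult[OF h] compatible_conc EFSym_supp_endo[OF x] EFSym_supp_endo[OF y] by blast

lemma compatible_supp_coprod:
  assumes "x \<in> EFSym" "(a, b) \<in> supp (coprod x)"
  shows "\<exists>f\<in>supp x. Q f = (Q a \<and> Q b)"
  using supp_coprod[OF assms(2)] compatible_coprod_coeff EFSym_supp_endo[OF assms(1)] by fastforce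

lemma compatible_antipode_bas:
  fixes S :: "(nat list \<Rightarrow> 'k::field) \<Rightarrow> nat list \<Rightarrow> 'k"
  assumes S: "is_antipode S"
  shows "is_endo f \<Longrightarrow> h \<in> supp (S (bas f)) \<Longrightarrow> Q h = Q f"
proof (induction "length f" arbitrary: f h rule: less_induct)
  case less
  consider "f = []" "h = []"
    | c d where "length c < length f" "coprod_coeff f c d \<noteq> 0" "h \<in> supp (mult (S (bas c)) (bas d))"
    using antipode_supp_bas[OF S less.prems] by metis
  then show ?case
  proof cases
    case (2 c d)
    have endo: "is_endo c" "is_endo d" using coprod_coeff_endo[OF 2(2)] by auto
    obtain g where g: "g \<in> supp (S (bas c))" "h = conc g d"
      using supp_mult[OF 2(3)] unfolding supp_bas by blast
    have "is_endo g"
      using EFSym_supp_endo[OF antipode_in_EFSym[OF S bas_in_EFSym[OF endo(1)]] g(1)] .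
    then have "Q h = (Q g \<and> Q d)" using compatible_conc endo g(2) by blast
    also have "Q g = Q c" using less.hyps[OF 2(1) endo(1) g(1)] .
    also have "(Q c \<and> Q d) = Q f" using compatible_coprod_coeff[OF less.prems(1) 2(2)] by simp
    finally show ?thesis .
  qed simp
qed

lemma compatible_supp_antipode:
  fixes S :: "(nat list \<Rightarrow> 'k::field) \<Rightarrow> nat list \<Rightarrow> 'k"
  assumes S: "is_antipode S" and x: "x \<in> EFSym" and h: "h \<in> supp (S x)"
  shows "\<exists>f\<in>supp x. Q h = Q f"
proof -
  have "linear_on S" using S by (simp add: is_antipode_def)
  then obtain f where "f \<in> supp x" "h \<in> supp (S (bas f))" using supp_linear_image x h by blast
  then show ?thesis using compatible_antipode_bas[OF S EFSym_supp_endo[OF x]] by blast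
qed

lemma hopf_ideal_span_compl:
  "hopf_ideal (span_basis (\<lambda>f. \<not> Q f) :: (nat list \<Rightarrow> 'k::field) set)
     {t \<in> EFSym2. \<forall>(a, b)\<in>supp t. \<not> Q a \<or> \<not> Q b}"
  unfolding hopf_ideal_def
proof (intro conjI ballI allI impI subsetI)
  fix x :: "nat list \<Rightarrow> 'k" assume x: "x \<in> span_basis (\<lambda>f. \<not> Q f)"
  then have xE: "x \<in> EFSym" and xQ: "\<forall>f\<in>supp x. \<not> Q f" by (auto simp: mem_span_basis)
  show "x \<in> EFSym" by (rule xE)
  fix y :: "nat list \<Rightarrow> 'k" assume y: "y \<in> EFSym"
  show "mult x y \<in> span_basis (\<lambda>f. \<not> Q f)" "mult y x \<in> span_basis (\<lambda>f. \<not> Q f)"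
    using compatible_supp_mult[OF xE y] compatible_supp_mult[OF y xE] xQ
    by (auto simp: mem_span_basis mult_in_EFSym xE y)
next
  fix x :: "nat list \<Rightarrow> 'k" assume "x \<in> span_basis (\<lambda>f. \<not> Q f)"
  then have xE: "x \<in> EFSym" and xQ: "\<forall>f\<in>supp x. \<not> Q f" by (auto simp: mem_span_basis)
  show "coprod x \<in> {t \<in> EFSym2. \<forall>(a, b)\<in>supp t. \<not> Q a \<or> \<not> Q b}"
    using coprod_in_EFSym2[OF xE] compatible_supp_coprod[OF xE] xQ by fastforce
  show "counit x = 0"
    using xQ compatible_Nil by (auto simp: counit_def supp_def)
next
  fix S :: "(nat list \<Rightarrow> 'k) \<Rightarrow> nat list \<Rightarrow> 'k" and y
  assume S: "is_antipode S" and "y \<in> S ` span_basis (\<lambda>f. \<not> Q f)"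
  then obtain x where x: "x \<in> span_basis (\<lambda>f. \<not> Q f)" "y = S x" by blast
  then have xE: "x \<in> EFSym" and xQ: "\<forall>f\<in>supp x. \<not> Q f" by (auto simp: mem_span_basis)
  show "y \<in> span_basis (\<lambda>f. \<not> Q f)"
    using antipode_in_EFSym[OF S xE] compatible_supp_antipode[OF S xE] xQ x(2)
    by (auto simp: mem_span_basis)
qed

lemma hopf_subalgebra_span:
  "hopf_subalgebra (span_basis Q :: (nat list \<Rightarrow> 'k::field) set)
     {t \<in> EFSym2. \<forall>(a, b)\<in>supp t. Q a \<and> Q b}"
  unfolding hopf_subalgebra_def
proof (intro conjI ballI allI impI subsetI)
  show "x \<in> EFSym" if "x \<in> (span_basis Q :: (nat list \<Rightarrow> 'k) set)" for x
    using that by (simp add: mem_span_basis)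
  show "(unit_el :: nat list \<Rightarrow> 'k) \<in> span_basis Q"
    using bas_in_EFSym[of "[]"] compatible_Nil
    by (simp add: mem_span_basis unit_el_def supp_bas is_endo_def)
next
  fix x y :: "nat list \<Rightarrow> 'k" assume "x \<in> span_basis Q" "y \<in> span_basis Q"
  then show "mult x y \<in> span_basis Q"
    using compatible_supp_mult by (fastforce simp: mem_span_basis mult_in_EFSym)
next
  fix x :: "nat list \<Rightarrow> 'k" assume "x \<in> span_basis Q"
  then have xE: "x \<in> EFSym" and xQ: "\<forall>f\<in>supp x. Q f" by (auto simp: mem_span_basis)
  show "coprod x \<in> {t \<in> EFSym2. \<forall>(a, b)\<in>supp t. Q a \<and> Q b}"
    using coprod_in_EFSym2[OF xE] compatible_supp_coprod[OF xE] xQ by fastforce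
next
  fix S :: "(nat list \<Rightarrow> 'k) \<Rightarrow> nat list \<Rightarrow> 'k" and y
  assume S: "is_antipode S" and "y \<in> S ` span_basis Q"
  then obtain x where x: "x \<in> span_basis Q" "y = S x" by blast
  then have xE: "x \<in> EFSym" and xQ: "\<forall>f\<in>supp x. Q f" by (auto simp: mem_span_basis)
  show "y \<in> span_basis Q"
    using antipode_in_EFSym[OF S xE] compatible_supp_antipode[OF S xE] xQ x(2)
    by (auto simp: mem_span_basis)
qed

lemma proj_span_mult:
  assumes x: "x \<in> EFSym" and y: "y \<in> EFSym"
  shows "proj_span Q (mult x y) = mult (proj_span Q x) (proj_span Q y)"
proof
  fix h
  have summand: "(if conc f g = h then proj_span Q x f * proj_span Q y g else 0)
      = (if Q h then (if conc f g = h then x f * y g else 0) else 0)"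
    if "f \<in> supp x" "g \<in> supp y" for f g
    using compatible_conc[OF EFSym_supp_endo[OF x that(1)] EFSym_supp_endo[OF y that(2)]]
    by (auto simp: proj_span_def)
  have "mult (proj_span Q x) (proj_span Q y) h
      = (\<Sum>f\<in>supp x. \<Sum>g\<in>supp y. if conc f g = h then proj_span Q x f * proj_span Q y g else 0)"
    by (rule mult_eq_sum_superset) (simp_all add: EFSym_finite_supp x y supp_proj_span)
  also have "\<dots> = proj_span Q (mult x y) h"
    by (simp add: summand proj_span_def mult_def cong: sum.cong)
  finally show "proj_span Q (mult x y) h = mult (proj_span Q x) (proj_span Q y) h" ..
qed

lemma proj_span_coprod:
  assumes x: "x \<in> EFSym"
  shows "coprod (proj_span Q x) = tensor_map (proj_span Q) (proj_span Q) (coprod x)"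
proof
  fix p :: "nat list \<times> nat list"
  obtain a b where p: "p = (a, b)" by fastforce
  have summand: "proj_span Q x f * of_nat (coprod_coeff f a b)
      = (if Q a \<and> Q b then x f * of_nat (coprod_coeff f a b) else 0)" if "f \<in> supp x" for f
    using compatible_coprod_coeff[OF EFSym_supp_endo[OF x that], of a b]
    by (cases "coprod_coeff f a b = 0") (auto simp: proj_span_def)
  have "coprod (proj_span Q x) (a, b) = (\<Sum>f\<in>supp x. proj_span Q x f * of_nat (coprod_coeff f a b))"
    by (rule coprod_eq_sum_superset) (simp_all add: EFSym_finite_supp x supp_proj_span)
  also have "\<dots> = (if Q a \<and> Q b then coprod x (a, b) else 0)"
    by (cases "Q a \<and> Q b") (auto simp: summand coprod_def cong: sum.cong)
  also have "\<dots> = tensor_map (proj_span Q) (proj_span Q) (coprod x) (a, b)"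
    using coprod_in_EFSym2[OF x] by (simp add: tensor_map_proj_span EFSym2_def)
  finally show "coprod (proj_span Q x) p = tensor_map (proj_span Q) (proj_span Q) (coprod x) p"
    using p by simp
qed

lemma quotient_iso_span:
  "quotient_iso (span_basis (\<lambda>f. \<not> Q f) :: (nat list \<Rightarrow> 'k::field) set) (span_basis Q)"
  unfolding quotient_iso_def
proof (intro exI[of _ "proj_span Q"] conjI ballI)
  show "linear_on (proj_span Q :: (nat list \<Rightarrow> 'k) \<Rightarrow> _)"
    by (simp add: linear_on_def proj_span_def smult_el_def fun_eq_iff)
  have "proj_span Q x \<in> span_basis Q" if "x \<in> EFSym" for x :: "nat list \<Rightarrow> 'k"
    using proj_span_in_EFSym[OF that] by (auto simp: mem_span_basis supp_def proj_span_def)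
  moreover have "x \<in> EFSym \<and> proj_span Q x = x" if "x \<in> span_basis Q" for x :: "nat list \<Rightarrow> 'k"
    using that by (auto simp: fun_eq_iff proj_span_def mem_span_basis supp_def)
  ultimately show "proj_span Q ` EFSym = (span_basis Q :: (nat list \<Rightarrow> 'k) set)"
    by (metis (no_types, lifting) image_eqI image_subsetI subset_antisym subsetI)
  show "{x \<in> EFSym. proj_span Q x = (\<lambda>_. 0)} = (span_basis (\<lambda>f. \<not> Q f) :: (nat list \<Rightarrow> 'k) set)"
    by (auto simp: mem_span_basis fun_eq_iff proj_span_def supp_def)
  show "proj_span Q (unit_el :: nat list \<Rightarrow> 'k) = unit_el"
    using compatible_Nil by (auto simp: fun_eq_iff proj_span_def unit_el_def bas_def)
  show "counit (proj_span Q x) = counit x" for x :: "nat list \<Rightarrow> 'k"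
    using compatible_Nil by (simp add: counit_def proj_span_def)
qed (simp_all add: proj_span_mult proj_span_coprod)

end

lemma hopf_compatible_acyclic_map: "hopf_compatible acyclic_map"
  unfolding hopf_compatible_def
  by (intro conjI allI impI) (simp_all add: acyclic_map_conc acyclic_map_coprod_coeff,
      simp add: acyclic_map_def)

theorem mainTheorem14:
  shows "hopf_ideal (I_o :: (nat list \<Rightarrow> 'k::field) set) I_o_tensor
       \<and> hopf_subalgebra (H_o :: (nat list \<Rightarrow> 'k) set) H_o_tensor
       \<and> quotient_iso (I_o :: (nat list \<Rightarrow> 'k) set) H_o"
  unfolding I_o_def I_o_tensor_def H_o_def H_o_tensor_def
  using hopf_ideal_span_compl hopf_subalgebra_span quotient_iso_span hopf_compatible_acyclic_map
  by blast

end
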